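(* Let $p\in(0,1)$, let $(\mathcal M,d,0)$ be a finite pointed $p$-metric space, $a\in\mathbb R^{\mathcal M\setminus\{0\}}$ and $z\in\mathcal M\setminus\{0\}$ with $a_z=0$. Let $T\in\mathcal T(\mathcal M)$ satisfy $|\mathrm{desc}_T(z)|\ge1$ and put \[T(z,a):=\sum_{y\in\mathrm{desc}_T(z)}|c_T(y,a)|^pd^p(z,y)+\Big|\sum_{y\in\mathrm{desc}_T(z)}c_T(y,a)\Big|^pd^p(\mathrm{pred}_T(z),z).\] Assume that $T(z,a)\ge\sum_{y\in\mathrm{desc}_T(z)}|c_T(y,a)|^pd^p(\mathrm{pred}_T(z),y)$. Then \[T(a)\ge\Big\|\sum_{x\in\mathcal M\setminus\{0,z\}}a_x\delta(x)\Big\|_{\mathcal F_p(\mathcal M\setminus\{z\})}.\]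
   Context: A $p$-metric space is a set with $d$ such that $d^p$ is a metric; pointed means a distinguished point $0$. A $p$-Banach space is a complete vector space with a $p$-norm. $\delta(x)$ is evaluation at $x$ on real functions vanishing at $0$, and $\mathcal F_p(\mathcal M)$ is the completion of $\mathrm{span}\{\delta(x)\}$ under $\|\sum a_i\delta(x_i)\|=\sup\|\sum a_if(x_i)\|_Y$ over $p$-Banach $Y$ and $1$-Lipschitz $f:\mathcal M\to Y$ with $f(0)=0$; $\mathcal M\setminus\{z\}$ carries the restricted metric. $\mathcal T(\mathcal M)$ is the set of trees on $\mathcal M$ rooted at $0$; for $x\ne0$, $\mathrm{pred}_T(x)$ is the neighbour of $x$ on the path to $0$, $e_x^T=\{\mathrm{pred}_T(x),x\}$, $V_x^T$ is the vertex set of the subtree rooted at $x$, and $\mathrm{desc}_T(x)=\{v:\mathrm{pred}_T(v)=x\}$. $c_T(x,a)=\sum_{y\in V_x^T}a_y$ and $T(a)=\big(\sum_{x\in\mathcal M\setminus\{0\}}|c_T(x,a)d(e_x^T)|^p\big)^{1/p}$. *)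

theory Defs
  imports "HOL-Analysis.Analysis"
begin

definition p_metric :: "real \<Rightarrow> 'a set \<Rightarrow> ('a \<Rightarrow> 'a \<Rightarrow> real) \<Rightarrow> bool" where
  "p_metric p M d \<longleftrightarrow>
     (\<forall>x\<in>M. \<forall>y\<in>M. d x y \<ge> 0 \<and> (d x y = 0 \<longleftrightarrow> x = y) \<and> d x y = d y x) \<and>
     (\<forall>x\<in>M. \<forall>y\<in>M. \<forall>w\<in>M. d x w powr p \<le> d x y powr p + d y w powr p)"

definition p_norm :: "real \<Rightarrow> ('y::real_vector \<Rightarrow> real) \<Rightarrow> bool" where
  "p_norm p N \<longleftrightarrow>
     (\<forall>x. N x \<ge> 0) \<and> (\<forall>x. N x = 0 \<longleftrightarrow> x = 0) \<and>
     (\<forall>c x. N (c *\<^sub>R x) = \<bar>c\<bar> * N x) \<and>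
     (\<forall>x y. N (x + y) powr p \<le> N x powr p + N y powr p)"

definition p_banach :: "real \<Rightarrow> ('y::real_vector \<Rightarrow> real) \<Rightarrow> bool" where
  "p_banach p N \<longleftrightarrow> p_norm p N \<and>
     (\<forall>X::nat \<Rightarrow> 'y. (\<forall>e>0. \<exists>K. \<forall>m\<ge>K. \<forall>n\<ge>K. N (X m - X n) < e) \<longrightarrow>
        (\<exists>L. (\<lambda>n. N (X n - L)) \<longlonglongrightarrow> 0))"

text \<open>Rooted trees on M with root r0, encoded by the predecessor (parent) map:
  every vertex reaches the root by iterating pred; edges are {pred x, x} for x in M - {r0}.\<close>
definition is_tree :: "'a set \<Rightarrow> 'a \<Rightarrow> ('a \<Rightarrow> 'a) \<Rightarrow> bool" where
  "is_tree M r0 pred \<longleftrightarrow> pred r0 = r0 \<and> (\<forall>x\<in>M. pred x \<in> M \<and> (\<exists>n. (pred ^^ n) x = r0))"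

definition subtree :: "'a set \<Rightarrow> ('a \<Rightarrow> 'a) \<Rightarrow> 'a \<Rightarrow> 'a set" where
  "subtree M pred x = {v\<in>M. \<exists>n. (pred ^^ n) v = x}"

definition desc :: "'a set \<Rightarrow> 'a \<Rightarrow> ('a \<Rightarrow> 'a) \<Rightarrow> 'a \<Rightarrow> 'a set" where
  "desc M r0 pred x = {v\<in>M - {r0}. pred v = x}"

definition cT :: "'a set \<Rightarrow> ('a \<Rightarrow> 'a) \<Rightarrow> 'a \<Rightarrow> ('a \<Rightarrow> real) \<Rightarrow> real" where
  "cT M pred x a = (\<Sum>y\<in>subtree M pred x. a y)"

definition Tnorm :: "real \<Rightarrow> 'a set \<Rightarrow> 'a \<Rightarrow> ('a \<Rightarrow> 'a \<Rightarrow> real) \<Rightarrow> ('a \<Rightarrow> 'a) \<Rightarrow> ('a \<Rightarrow> real) \<Rightarrow> real" where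
  "Tnorm p M r0 d pred a =
     (\<Sum>x\<in>M - {r0}. \<bar>cT M pred x a * d (pred x) x\<bar> powr p) powr (1 / p)"

definition Tz :: "real \<Rightarrow> 'a set \<Rightarrow> 'a \<Rightarrow> ('a \<Rightarrow> 'a \<Rightarrow> real) \<Rightarrow> ('a \<Rightarrow> 'a) \<Rightarrow> 'a \<Rightarrow> ('a \<Rightarrow> real) \<Rightarrow> real" where
  "Tz p M r0 d pred z a =
     (\<Sum>y\<in>desc M r0 pred z. \<bar>cT M pred y a\<bar> powr p * d z y powr p)
     + \<bar>\<Sum>y\<in>desc M r0 pred z. cT M pred y a\<bar> powr p * d (pred z) z powr p"

end

theory Submission
  imports Defs
begin

text \<open>Abel summation along the tree writes \<open>\<Sum>\<^sub>x a\<^sub>x f(x)\<close> as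
  \<open>\<Sum>\<^sub>x c\<^sub>T(x,a) (f(x) - f(pred x))\<close> whenever \<open>f(0) = 0\<close>. Here \<open>f\<close> is only
  Lipschitz off \<open>z\<close>, so replace \<open>f(z)\<close> by \<open>f(pred z)\<close>, which does not change the sum
  because \<open>a\<^sub>z = 0\<close>. This kills the edge at \<open>z\<close> and turns each edge from \<open>z\<close> to a child \<open>y\<close>
  into an increment \<open>f(y) - f(pred z)\<close>: the children of \<open>z\<close> are rerouted to \<open>pred z\<close>.
  The p-triangle inequality and the Lipschitz bound then estimate the p-th power of the norm by
  \<open>T(a)\<^sup>p - T(z,a) + \<Sum>\<^sub>y |c\<^sub>T(y,a)|\<^sup>p d\<^sup>p(pred z, y)\<close>, where \<open>c\<^sub>T(z,a) = \<Sum>\<^sub>y c\<^sub>T(y,a)\<close>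
  is used to recognise \<open>T(z,a)\<close>; the hypothesis bounds the last sum by \<open>T(z,a)\<close>.\<close>

lemma funpow_split:
  assumes "i \<le> j"
  shows "(f ^^ j) x = (f ^^ (j - i)) ((f ^^ i) x)"
proof -
  have "j = (j - i) + i" using assms by simp
  then show ?thesis by (metis comp_apply funpow_add)
qed

lemma is_tree_funpow_in_carrier: "is_tree M r0 pred \<Longrightarrow> x \<in> M \<Longrightarrow> (pred ^^ n) x \<in> M"
  by (induction n) (auto simp: is_tree_def)

lemma is_tree_funpow_root: "is_tree M r0 pred \<Longrightarrow> (pred ^^ n) r0 = r0"
  by (induction n) (auto simp: is_tree_def)

lemma is_tree_funpow_stays_at_root:
  assumes "is_tree M r0 pred" "(pred ^^ n) x = r0" "n \<le> m"
  shows "(pred ^^ m) x = r0"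
  using funpow_split[OF assms(3)] assms(2) is_tree_funpow_root[OF assms(1)] by metis

lemma is_tree_periodic_imp_root:
  assumes T: "is_tree M r0 pred" and "x \<in> M" "0 < k" and period: "(pred ^^ k) x = x"
  shows "x = r0"
proof -
  obtain n where n: "(pred ^^ n) x = r0" using T \<open>x \<in> M\<close> unfolding is_tree_def by blast
  have "((pred ^^ k) ^^ n) x = x" using period by (induction n) auto
  then have "(pred ^^ (k * n)) x = x" by (simp add: funpow_mult)
  moreover have "(pred ^^ (k * n)) x = r0"
    using is_tree_funpow_stays_at_root[OF T n] \<open>0 < k\<close> by simp
  ultimately show ?thesis by simp
qed

lemma is_tree_pred_neq:
  assumes "is_tree M r0 pred" "x \<in> M - {r0}"
  shows "pred x \<noteq> x"
  using is_tree_periodic_imp_root[OF assms(1), of x 1] assms(2) by auto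

lemma is_tree_ancestor_path:
  assumes T: "is_tree M r0 pred" and v: "v \<in> M"
  obtains h where "(pred ^^ h) v = r0" and "inj_on (\<lambda>n. (pred ^^ n) v) {..<h}"
    and "{x \<in> M - {r0}. v \<in> subtree M pred x} = (\<lambda>n. (pred ^^ n) v) ` {..<h}"
proof
  define h where "h = (LEAST n. (pred ^^ n) v = r0)"
  have ex: "\<exists>n. (pred ^^ n) v = r0" using T v unfolding is_tree_def by blast
  show hv: "(pred ^^ h) v = r0" unfolding h_def by (rule LeastI_ex[OF ex])
  have below: "(pred ^^ n) v \<noteq> r0" if "n < h" for n
    using not_less_Least[of n "\<lambda>n. (pred ^^ n) v = r0"] that unfolding h_def by blast
  show "inj_on (\<lambda>n. (pred ^^ n) v) {..<h}"
  proof (rule linorder_inj_onI')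
    fix i j assume "i \<in> {..<h}" "j \<in> {..<h}" "i < j"
    show "(pred ^^ i) v \<noteq> (pred ^^ j) v"
    proof
      assume "(pred ^^ i) v = (pred ^^ j) v"
      then have "(pred ^^ (j - i)) ((pred ^^ i) v) = (pred ^^ i) v"
        using funpow_split[of i j pred v] \<open>i < j\<close> by simp
      then have "(pred ^^ i) v = r0"
        using is_tree_periodic_imp_root[OF T is_tree_funpow_in_carrier[OF T v], where k = "j - i"]
          \<open>i < j\<close> by simp
      then show False using below \<open>i < j\<close> \<open>j \<in> {..<h}\<close> by simp
    qed
  qed
  show "{x \<in> M - {r0}. v \<in> subtree M pred x} = (\<lambda>n. (pred ^^ n) v) ` {..<h}"
  proof (intro set_eqI iffI)
    fix x assume "x \<in> {x \<in> M - {r0}. v \<in> subtree M pred x}"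
    then obtain n where x: "x \<noteq> r0" "(pred ^^ n) v = x" unfolding subtree_def by auto
    then have "n < h" using is_tree_funpow_stays_at_root[OF T hv, of n] by (metis not_less)
    then show "x \<in> (\<lambda>n. (pred ^^ n) v) ` {..<h}" using x by auto
  next
    fix x assume "x \<in> (\<lambda>n. (pred ^^ n) v) ` {..<h}"
    then show "x \<in> {x \<in> M - {r0}. v \<in> subtree M pred x}"
      using below is_tree_funpow_in_carrier[OF T v] v unfolding subtree_def by auto
  qed
qed

lemma sum_ancestor_increments:
  fixes g :: "'a \<Rightarrow> 'b::ab_group_add"
  assumes T: "is_tree M r0 pred" and v: "v \<in> M"
  shows "(\<Sum>x\<in>{x \<in> M - {r0}. v \<in> subtree M pred x}. g x - g (pred x)) = g v - g r0"
proof -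
  obtain h where hv: "(pred ^^ h) v = r0" and inj: "inj_on (\<lambda>n. (pred ^^ n) v) {..<h}"
    and path: "{x \<in> M - {r0}. v \<in> subtree M pred x} = (\<lambda>n. (pred ^^ n) v) ` {..<h}"
    using is_tree_ancestor_path[OF T v] .
  have "(\<Sum>x\<in>{x \<in> M - {r0}. v \<in> subtree M pred x}. g x - g (pred x))
      = (\<Sum>n<h. g ((pred ^^ n) v) - g ((pred ^^ Suc n) v))"
    unfolding path sum.reindex[OF inj] by simp
  also have "\<dots> = g v - g r0"
    using sum_lessThan_telescope'[of "\<lambda>n. g ((pred ^^ n) v)" h] hv by simp
  finally show ?thesis .
qed

lemma sum_scaleR_eq_sum_cT_increments:
  fixes g :: "'a \<Rightarrow> 'b::real_vector"
  assumes T: "is_tree M r0 pred" and fin: "finite M" and "r0 \<in> M" and "g r0 = 0"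
  shows "(\<Sum>x\<in>M - {r0}. a x *\<^sub>R g x)
       = (\<Sum>x\<in>M - {r0}. cT M pred x a *\<^sub>R (g x - g (pred x)))"
proof -
  let ?inc = "\<lambda>x. g x - g (pred x)"
  have subtree_filter: "subtree M pred x = {v \<in> M. v \<in> subtree M pred x}" for x
    by (auto simp: subtree_def)
  have "(\<Sum>x\<in>M - {r0}. cT M pred x a *\<^sub>R ?inc x)
      = (\<Sum>x\<in>M - {r0}. \<Sum>v\<in>M. if v \<in> subtree M pred x then a v *\<^sub>R ?inc x else 0)"
    unfolding cT_def scaleR_sum_left
    by (subst subtree_filter) (simp add: sum.inter_filter[OF fin])
  also have "\<dots> = (\<Sum>v\<in>M. \<Sum>x\<in>M - {r0}. if v \<in> subtree M pred x then a v *\<^sub>R ?inc x else 0)"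
    by (rule sum.swap)
  also have "\<dots> = (\<Sum>v\<in>M. a v *\<^sub>R (\<Sum>x\<in>{x \<in> M - {r0}. v \<in> subtree M pred x}. ?inc x))"
    unfolding scaleR_sum_right using finite_Diff[OF fin] by (simp only: sum.inter_filter)
  also have "\<dots> = (\<Sum>v\<in>M. a v *\<^sub>R g v)"
    by (intro sum.cong refl) (simp only: sum_ancestor_increments[OF T] \<open>g r0 = 0\<close> diff_zero)
  also have "\<dots> = (\<Sum>v\<in>M - {r0}. a v *\<^sub>R g v)"
    using fin \<open>r0 \<in> M\<close> \<open>g r0 = 0\<close> by (simp add: sum.remove)
  finally show ?thesis by simp
qed

lemma is_tree_not_in_subtree_child:
  assumes T: "is_tree M r0 pred" and y: "y \<in> desc M r0 pred z"
  shows "z \<notin> subtree M pred y"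
proof
  assume "z \<in> subtree M pred y"
  then obtain n where "(pred ^^ n) z = y" unfolding subtree_def by blast
  moreover have "pred y = z" "y \<in> M" "y \<noteq> r0" using y unfolding desc_def by auto
  ultimately have "(pred ^^ Suc n) y = y" by (simp add: funpow_swap1)
  then show False using is_tree_periodic_imp_root[OF T \<open>y \<in> M\<close>] \<open>y \<noteq> r0\<close> by blast
qed

lemma is_tree_subtrees_of_children_disjoint:
  assumes T: "is_tree M r0 pred"
    and y1: "y1 \<in> desc M r0 pred z" and y2: "y2 \<in> desc M r0 pred z" and "y1 \<noteq> y2"
  shows "subtree M pred y1 \<inter> subtree M pred y2 = {}"
proof -
  have no_descent: False if "(pred ^^ i) v = u1" "(pred ^^ j) v = u2" "i < j"
      "u1 \<in> desc M r0 pred z" "u2 \<in> desc M r0 pred z" for v i j u1 u2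
  proof -
    obtain m where m: "j - i = Suc m" using \<open>i < j\<close> by (metis Suc_diff_Suc)
    have "(pred ^^ m) (pred u1) = u2"
      using funpow_split[of i j pred v] that(1,2) \<open>i < j\<close> m by (simp add: funpow_swap1)
    moreover have "pred u1 = z" "z \<in> M" using that(4) T unfolding desc_def is_tree_def by auto
    ultimately have "z \<in> subtree M pred u2" unfolding subtree_def by blast
    then show False using is_tree_not_in_subtree_child[OF T that(5)] by blast
  qed
  show ?thesis
  proof (rule ccontr)
    assume "subtree M pred y1 \<inter> subtree M pred y2 \<noteq> {}"
    then obtain v i j where "(pred ^^ i) v = y1" "(pred ^^ j) v = y2"
      unfolding subtree_def by blast
    then show False using no_descent y1 y2 \<open>y1 \<noteq> y2\<close> by (metis linorder_neqE_nat)
  qed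
qed

lemma is_tree_subtree_eq_insert_children:
  assumes T: "is_tree M r0 pred" and z: "z \<in> M - {r0}"
  shows "subtree M pred z = insert z (\<Union>y\<in>desc M r0 pred z. subtree M pred y)"
proof (intro set_eqI iffI)
  fix v assume "v \<in> subtree M pred z"
  then obtain n where v: "v \<in> M" "(pred ^^ n) v = z" unfolding subtree_def by auto
  show "v \<in> insert z (\<Union>y\<in>desc M r0 pred z. subtree M pred y)"
  proof (cases n)
    case 0
    then show ?thesis using v by simp
  next
    case (Suc m)
    let ?y = "(pred ^^ m) v"
    have "pred ?y = z" using v Suc by simp
    then have "?y \<in> desc M r0 pred z"
      using T z is_tree_funpow_in_carrier[OF T v(1)] unfolding desc_def is_tree_def by auto
    moreover have "v \<in> subtree M pred ?y" using v unfolding subtree_def by auto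
    ultimately show ?thesis by blast
  qed
next
  fix v assume "v \<in> insert z (\<Union>y\<in>desc M r0 pred z. subtree M pred y)"
  then consider "v = z" | y n where "y \<in> desc M r0 pred z" "v \<in> M" "(pred ^^ n) v = y"
    unfolding subtree_def by auto
  then show "v \<in> subtree M pred z"
  proof cases
    case 1
    then show ?thesis using z unfolding subtree_def by (auto intro: exI[of _ 0])
  next
    case 2
    then have "(pred ^^ Suc n) v = z" unfolding desc_def by auto
    then show ?thesis using \<open>v \<in> M\<close> unfolding subtree_def by blast
  qed
qed

lemma cT_eq_sum_children:
  assumes T: "is_tree M r0 pred" and fin: "finite M" and z: "z \<in> M - {r0}"
  shows "cT M pred z a = a z + (\<Sum>y\<in>desc M r0 pred z. cT M pred y a)"
proof -
  have fin_desc: "finite (desc M r0 pred z)" using fin unfolding desc_def by auto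
  have fin_subtree: "finite (subtree M pred y)" for y using fin unfolding subtree_def by auto
  have "cT M pred z a = a z + (\<Sum>v\<in>(\<Union>y\<in>desc M r0 pred z. subtree M pred y). a v)"
    unfolding cT_def is_tree_subtree_eq_insert_children[OF T z]
    using is_tree_not_in_subtree_child[OF T] fin_desc fin_subtree by (subst sum.insert) auto
  also have "(\<Sum>v\<in>(\<Union>y\<in>desc M r0 pred z. subtree M pred y). a v)
      = (\<Sum>y\<in>desc M r0 pred z. cT M pred y a)"
    unfolding cT_def using fin_desc fin_subtree is_tree_subtrees_of_children_disjoint[OF T]
    by (subst sum.UNION_disjoint) auto
  finally show ?thesis .
qed

lemma p_norm_sum_powr_le:
  assumes N: "p_norm p N" and "finite S"
  shows "N (\<Sum>i\<in>S. v i) powr p \<le> (\<Sum>i\<in>S. N (v i) powr p)"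
  using \<open>finite S\<close>
proof (induction S rule: finite_induct)
  case empty
  then show ?case using N unfolding p_norm_def by simp
next
  case (insert i S)
  have "N (\<Sum>i\<in>insert i S. v i) powr p = N (v i + (\<Sum>i\<in>S. v i)) powr p"
    using insert by simp
  also have "\<dots> \<le> N (v i) powr p + N (\<Sum>i\<in>S. v i) powr p"
    using N unfolding p_norm_def by blast
  also have "\<dots> \<le> N (v i) powr p + (\<Sum>i\<in>S. N (v i) powr p)"
    using insert by simp
  finally show ?case using insert by simp
qed

lemma p_norm_powr_sum_le_sum_cT_increments:
  fixes g :: "'a \<Rightarrow> 'y::real_vector"
  assumes T: "is_tree M r0 pred" and fin: "finite M" and "r0 \<in> M" and "g r0 = 0"
    and N: "p_norm p N"
  shows "N (\<Sum>x\<in>M - {r0}. a x *\<^sub>R g x) powr p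
       \<le> (\<Sum>x\<in>M - {r0}. \<bar>cT M pred x a\<bar> powr p * N (g x - g (pred x)) powr p)"
proof -
  have homogeneous: "N (c *\<^sub>R v) powr p = \<bar>c\<bar> powr p * N v powr p" for c v
    using N unfolding p_norm_def by (simp add: powr_mult)
  show ?thesis
    unfolding sum_scaleR_eq_sum_cT_increments[where g = g, OF T fin \<open>r0 \<in> M\<close> \<open>g r0 = 0\<close>]
    using p_norm_sum_powr_le[OF N, of "M - {r0}" "\<lambda>x. cT M pred x a *\<^sub>R (g x - g (pred x))"] fin
    by (simp add: homogeneous)
qed

lemma rerouted_increment_le:
  fixes f :: "'a \<Rightarrow> 'y::real_vector"
  assumes T: "is_tree M r0 pred" and "p_metric p M d" and z: "z \<in> M - {r0}"
    and x: "x \<in> M - {r0, z}"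
    and lip: "\<forall>x\<in>M - {z}. \<forall>y\<in>M - {z}. N (f x - f y) \<le> d x y"
  shows "N ((f(z := f (pred z))) x - (f(z := f (pred z))) (pred x))
       \<le> d (if pred x = z then pred z else pred x) x"
proof -
  define y where "y = (if pred x = z then pred z else pred x)"
  have "pred z \<noteq> z" using is_tree_pred_neq[OF T z] .
  moreover have "pred x \<in> M" "pred z \<in> M" using T x z unfolding is_tree_def by auto
  ultimately have y: "y \<in> M - {z}" and "(f(z := f (pred z))) (pred x) = f y"
    unfolding y_def by auto
  moreover have "N (f x - f y) \<le> d x y" using lip x y by blast
  moreover have "d x y = d y x" using \<open>p_metric p M d\<close> x y unfolding p_metric_def by blast
  ultimately show ?thesis using x unfolding y_def by simp
qed

lemma abs_mult_dist_powr:
  assumes "p_metric p M d" "x \<in> M" "y \<in> M"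
  shows "\<bar>c * d x y\<bar> powr p = \<bar>c\<bar> powr p * d x y powr p"
  using assms unfolding p_metric_def by (simp add: abs_mult powr_mult)

lemma Tz_eq_sum_edges:
  assumes T: "is_tree M r0 pred" and fin: "finite M" and pm: "p_metric p M d"
    and z: "z \<in> M - {r0}" and "a z = 0"
  shows "Tz p M r0 d pred z a
       = (\<Sum>x\<in>insert z (desc M r0 pred z). \<bar>cT M pred x a * d (pred x) x\<bar> powr p)"
proof -
  let ?D = "desc M r0 pred z"
  have "z \<notin> ?D" using is_tree_pred_neq[OF T z] unfolding desc_def by auto
  have "finite ?D" using fin unfolding desc_def by auto
  have "pred z \<in> M" using T z unfolding is_tree_def by auto
  have "cT M pred z a = (\<Sum>y\<in>?D. cT M pred y a)"
    using cT_eq_sum_children[OF T fin z] \<open>a z = 0\<close> by simp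
  then have edge_z: "\<bar>cT M pred z a * d (pred z) z\<bar> powr p
      = \<bar>\<Sum>y\<in>?D. cT M pred y a\<bar> powr p * d (pred z) z powr p"
    using abs_mult_dist_powr[OF pm \<open>pred z \<in> M\<close>] z by simp
  have edges_D: "\<bar>cT M pred y a * d (pred y) y\<bar> powr p = \<bar>cT M pred y a\<bar> powr p * d z y powr p"
    if "y \<in> ?D" for y
    using that abs_mult_dist_powr[OF pm] z unfolding desc_def by auto
  show ?thesis
    unfolding Tz_def sum.insert[OF \<open>finite ?D\<close> \<open>z \<notin> ?D\<close>] edge_z
    using edges_D by simp
qed

lemma Tnorm_powr:
  assumes "0 < p"
  shows "Tnorm p M r0 d pred a powr p = (\<Sum>x\<in>M - {r0}. \<bar>cT M pred x a * d (pred x) x\<bar> powr p)"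
  using assms unfolding Tnorm_def by (simp add: powr_powr sum_nonneg powr_one)

lemma Tnorm_powr_eq_sum_other_edges_plus_Tz:
  assumes "0 < p" and T: "is_tree M r0 pred" and fin: "finite M" and pm: "p_metric p M d"
    and z: "z \<in> M - {r0}" and "a z = 0"
  shows "Tnorm p M r0 d pred a powr p
       = (\<Sum>x\<in>M - {r0} - insert z (desc M r0 pred z). \<bar>cT M pred x a * d (pred x) x\<bar> powr p)
         + Tz p M r0 d pred z a"
proof -
  have "insert z (desc M r0 pred z) \<subseteq> M - {r0}" using z unfolding desc_def by auto
  then show ?thesis
    unfolding Tnorm_powr[OF \<open>0 < p\<close>] Tz_eq_sum_edges[where a = a, OF T fin pm z \<open>a z = 0\<close>]
    using fin by (intro sum.subset_diff) auto
qed

lemma sum_scaleR_update_at_zero_weight: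
  fixes f :: "'a \<Rightarrow> 'b::real_vector"
  assumes "finite S" "z \<in> S" "a z = 0"
  shows "(\<Sum>x\<in>S - {z}. a x *\<^sub>R f x) = (\<Sum>x\<in>S. a x *\<^sub>R (f(z := v)) x)"
  using assms by (simp add: sum.remove)

lemma sum_rerouted_increments_le:
  fixes f :: "'a \<Rightarrow> 'y::real_vector"
  assumes "0 < p" and T: "is_tree M r0 pred" and fin: "finite M" and pm: "p_metric p M d"
    and z: "z \<in> M - {r0}" and N: "p_norm p N"
    and lip: "\<forall>x\<in>M - {z}. \<forall>y\<in>M - {z}. N (f x - f y) \<le> d x y"
  defines "g \<equiv> f(z := f (pred z))" and "D \<equiv> desc M r0 pred z"
  shows "(\<Sum>x\<in>M - {r0}. \<bar>cT M pred x a\<bar> powr p * N (g x - g (pred x)) powr p)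
       \<le> (\<Sum>x\<in>M - {r0} - insert z D. \<bar>cT M pred x a * d (pred x) x\<bar> powr p)
         + (\<Sum>y\<in>D. \<bar>cT M pred y a\<bar> powr p * d (pred z) y powr p)"
proof -
  define inc where "inc x = \<bar>cT M pred x a\<bar> powr p * N (g x - g (pred x)) powr p" for x
  have "pred z \<noteq> z" using is_tree_pred_neq[OF T z] .
  have D: "pred y = z" "y \<in> M - {r0, z}" if "y \<in> D" for y
    using that \<open>pred z \<noteq> z\<close> unfolding D_def desc_def by auto
  have inc_le: "inc x \<le> \<bar>cT M pred x a\<bar> powr p * t powr p" if "N (g x - g (pred x)) \<le> t" for x t
    unfolding inc_def using that \<open>0 < p\<close> N unfolding p_norm_def
    by (intro mult_left_mono powr_mono2) auto
  have "inc z = 0" using N \<open>pred z \<noteq> z\<close> unfolding inc_def g_def p_norm_def by simp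
  moreover have "z \<notin> D" "finite D" using D fin unfolding D_def desc_def by auto
  moreover have "insert z D \<subseteq> M - {r0}" using z D by auto
  ultimately have "(\<Sum>x\<in>M - {r0}. inc x) = (\<Sum>x\<in>M - {r0} - insert z D. inc x) + (\<Sum>y\<in>D. inc y)"
    using sum.subset_diff[of "insert z D" "M - {r0}" inc] fin by simp
  also have "\<dots> \<le> (\<Sum>x\<in>M - {r0} - insert z D. \<bar>cT M pred x a * d (pred x) x\<bar> powr p)
      + (\<Sum>y\<in>D. \<bar>cT M pred y a\<bar> powr p * d (pred z) y powr p)"
  proof (intro add_mono sum_mono)
    fix x assume "x \<in> M - {r0} - insert z D"
    then have x: "x \<in> M - {r0, z}" "pred x \<noteq> z" "pred x \<in> M"
      using T unfolding D_def desc_def is_tree_def by blast+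
    then have "N (g x - g (pred x)) \<le> d (pred x) x"
      using rerouted_increment_le[OF T pm z x(1) lip] unfolding g_def by simp
    then show "inc x \<le> \<bar>cT M pred x a * d (pred x) x\<bar> powr p"
      using inc_le abs_mult_dist_powr[OF pm x(3)] x(1) by simp
  next
    fix y assume "y \<in> D"
    then have "N (g y - g (pred y)) \<le> d (pred z) y"
      using rerouted_increment_le[OF T pm z D(2) lip] D(1) unfolding g_def by simp
    then show "inc y \<le> \<bar>cT M pred y a\<bar> powr p * d (pred z) y powr p"
      by (rule inc_le)
  qed
  finally show ?thesis unfolding inc_def .
qed

theorem lemma3p4:
  fixes p :: real and M :: "'a set" and r0 z :: 'a and d :: "'a \<Rightarrow> 'a \<Rightarrow> real"
    and a :: "'a \<Rightarrow> real" and pred :: "'a \<Rightarrow> 'a"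
    and N :: "'y::real_vector \<Rightarrow> real" and f :: "'a \<Rightarrow> 'y"
  assumes "0 < p" "p < 1"
    and "finite M" "r0 \<in> M" "p_metric p M d"
    and "z \<in> M - {r0}" "a z = 0"
    and "is_tree M r0 pred"
    and "card (desc M r0 pred z) \<ge> 1"
    and "Tz p M r0 d pred z a \<ge>
           (\<Sum>y\<in>desc M r0 pred z. \<bar>cT M pred y a\<bar> powr p * d (pred z) y powr p)"
    and "p_banach p N"
    and "f r0 = 0"
    and "\<forall>x\<in>M - {z}. \<forall>y\<in>M - {z}. N (f x - f y) \<le> d x y"
  shows "Tnorm p M r0 d pred a \<ge> N (\<Sum>x\<in>M - {r0, z}. a x *\<^sub>R f x)"
proof -
  note T = assms(8) and fin = assms(3) and pm = assms(5) and z = assms(6)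
  have N: "p_norm p N" using assms(11) unfolding p_banach_def by blast
  define g where "g = f(z := f (pred z))"
  have "g r0 = 0" using assms(12) z unfolding g_def by auto
  have "(\<Sum>x\<in>M - {r0, z}. a x *\<^sub>R f x) = (\<Sum>x\<in>M - {r0}. a x *\<^sub>R g x)"
    unfolding g_def using sum_scaleR_update_at_zero_weight[of "M - {r0}" z a] fin z assms(7)
    by (simp add: Diff_insert2[symmetric])
  then have "N (\<Sum>x\<in>M - {r0, z}. a x *\<^sub>R f x) powr p
      \<le> (\<Sum>x\<in>M - {r0}. \<bar>cT M pred x a\<bar> powr p * N (g x - g (pred x)) powr p)"
    using p_norm_powr_sum_le_sum_cT_increments[where g = g, OF T fin assms(4) \<open>g r0 = 0\<close> N]
    by simp
  also have "\<dots> \<le> (\<Sum>x\<in>M - {r0} - insert z (desc M r0 pred z).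
        \<bar>cT M pred x a * d (pred x) x\<bar> powr p)
      + (\<Sum>y\<in>desc M r0 pred z. \<bar>cT M pred y a\<bar> powr p * d (pred z) y powr p)"
    unfolding g_def by (rule sum_rerouted_increments_le[OF assms(1) T fin pm z N assms(13)])
  also have "\<dots> \<le> Tnorm p M r0 d pred a powr p"
    unfolding Tnorm_powr_eq_sum_other_edges_plus_Tz[where a = a, OF assms(1) T fin pm z assms(7)]
    using assms(10) by simp
  finally have "N (\<Sum>x\<in>M - {r0, z}. a x *\<^sub>R f x) powr p \<le> Tnorm p M r0 d pred a powr p" .
  moreover have "N (\<Sum>x\<in>M - {r0, z}. a x *\<^sub>R f x) \<ge> 0" using N unfolding p_norm_def by blast
  moreover have "Tnorm p M r0 d pred a \<ge> 0" unfolding Tnorm_def by simp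
  ultimately show ?thesis using powr_less_mono2[OF assms(1)] by (meson not_le)
qed

end
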